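(* Let $\mu$ be a non-atomic Radon measure on $\mathbb{R}^n$, let $1<p<\infty$ and let $w\in A^*_p(\mu)$. Then for every rectangle $R\subset\mathbb{R}^n$ with sides parallel to the coordinate axes and every $\lambda> w_R$, where $w_R=\frac{1}{\mu(R)}\int_R w\,d\mu$, \[ w(\{x\in R: w(x)>\lambda\})\le 2\lambda\,\mu\Big(\Big\{x\in R: w(x)>\frac{1}{2^{p-1}[w]_{A^*_p(\mu)}}\,w_R\Big\}\Big). \]
   Context: A weight is a nonnegative $\mu$-measurable function; for a set $E$, $w(E)=\int_E w\,d\mu$. "Rectangle" means a rectangle with sides parallel to the coordinate axes; averages are over rectangles with $0<\mu(R)<\infty$. For $1<p<\infty$, $p'=p/(p-1)$, $A^*_p(\mu)$ is the class of weights with \[ [w]_{A^*_p(\mu)}:=\sup_R \left(\frac{1}{\mu(R)}\int_R w\,d\mu\right)\left(\frac{1}{\mu(R)}\int_R w^{1-p'}\,d\mu\right)^{p-1}<\infty, \] the supremum over all rectangles $R$. *)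

theory Defs
  imports "HOL-Analysis.Analysis"
begin

definition rectangle :: "'a::euclidean_space set \<Rightarrow> bool" where
  "rectangle R \<longleftrightarrow> bounded R \<and>
     (\<exists>I :: 'a \<Rightarrow> real set. (\<forall>i\<in>Basis. is_interval (I i)) \<and>
        R = {x. \<forall>i\<in>Basis. x \<bullet> i \<in> I i})"

text \<open>Admissible rectangles: those over which averages are taken.\<close>
definition adm_rect :: "'a::euclidean_space measure \<Rightarrow> 'a set \<Rightarrow> bool" where
  "adm_rect M R \<longleftrightarrow> rectangle R \<and> 0 < emeasure M R \<and> emeasure M R < \<infinity>"

definition nonatomic_radon :: "'a::euclidean_space measure \<Rightarrow> bool" where
  "nonatomic_radon M \<longleftrightarrow> sets M = sets borel \<and>
     (\<forall>K. compact K \<longrightarrow> emeasure M K < \<infinity>) \<and>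
     (\<forall>x. emeasure M {x} = 0)"

definition weight :: "'a measure \<Rightarrow> ('a \<Rightarrow> real) \<Rightarrow> bool" where
  "weight M w \<longleftrightarrow> w \<in> borel_measurable M \<and> (\<forall>x. 0 \<le> w x)"

definition conj_exp :: "real \<Rightarrow> real" where
  "conj_exp p = p / (p - 1)"

text \<open>The function w^(1-p'), with the convention 0^(negative) = infinity.\<close>
definition dual_weight :: "real \<Rightarrow> ('a \<Rightarrow> real) \<Rightarrow> 'a \<Rightarrow> ennreal" where
  "dual_weight p w x = (if w x = 0 then \<infinity> else ennreal (w x powr (1 - conj_exp p)))"

definition Ap_quantity :: "'a measure \<Rightarrow> real \<Rightarrow> ('a \<Rightarrow> real) \<Rightarrow> 'a set \<Rightarrow> ennreal" where
  "Ap_quantity M p w R =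
     (let S = (\<integral>\<^sup>+x\<in>R. dual_weight p w x \<partial>M)
      in if S = \<infinity> then \<infinity>
         else ((\<integral>\<^sup>+x\<in>R. ennreal (w x) \<partial>M) / emeasure M R) *
              ennreal ((enn2real S / measure M R) powr (p - 1)))"

definition Ap_char :: "'a::euclidean_space measure \<Rightarrow> real \<Rightarrow> ('a \<Rightarrow> real) \<Rightarrow> ennreal" where
  "Ap_char M p w = (SUP R \<in> {R. adm_rect M R}. Ap_quantity M p w R)"

definition Ap_star :: "'a::euclidean_space measure \<Rightarrow> real \<Rightarrow> ('a \<Rightarrow> real) set" where
  "Ap_star M p = {w. weight M w \<and> Ap_char M p w < \<infinity>}"

definition avg :: "'a measure \<Rightarrow> ('a \<Rightarrow> real) \<Rightarrow> 'a set \<Rightarrow> real" where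
  "avg M w R = enn2real (\<integral>\<^sup>+x\<in>R. ennreal (w x) \<partial>M) / measure M R"

end

theory Submission imports Defs begin

text \<open>On the sublevel set \<open>E = {x \<in> R. w x \<le> c}\<close> the dual weight \<open>w\<^sup>1\<^sup>-\<^sup>p\<^sup>'\<close> is at least
  \<open>c\<^sup>1\<^sup>-\<^sup>p\<^sup>'\<close>, so Chebyshev's inequality and the \<open>A\<^sub>p\<^sup>*\<close> condition on \<open>R\<close> give
  \<open>w\<^sub>R (\<mu>(E) / \<mu>(R))\<^sup>p\<^sup>-\<^sup>1 \<le> [w] c\<close>. For \<open>c = w\<^sub>R / (2\<^sup>p\<^sup>-\<^sup>1 [w])\<close> this says that \<open>E\<close> fills at most
  half of \<open>R\<close>, so for \<open>\<lambda> > w\<^sub>R\<close> we get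
  \<open>w({x \<in> R. w x > \<lambda>}) \<le> w(R) = w\<^sub>R \<mu>(R) \<le> \<lambda> \<mu>(R) \<le> 2\<lambda> \<mu>(R - E)\<close>.\<close>

lemma rectangle_sets_borel:
  fixes R :: "'a::euclidean_space set"
  assumes "rectangle R"
  shows "R \<in> sets borel"
proof -
  from assms obtain I :: "'a \<Rightarrow> real set" where I: "\<forall>i\<in>Basis. is_interval (I i)"
    and R: "R = {x. \<forall>i\<in>Basis. x \<bullet> i \<in> I i}"
    unfolding rectangle_def by blast
  have "R = (\<Inter>i\<in>Basis. (\<lambda>x. x \<bullet> i) -` I i)"
    using R by auto
  moreover have "(\<lambda>x::'a. x \<bullet> i) -` I i \<in> sets borel" if "i \<in> Basis" for i
  proof -
    have [measurable]: "I i \<in> sets borel"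
      using I that real_interval_borel_measurable by blast
    show ?thesis
      using measurable_sets_borel[of "\<lambda>x::'a. x \<bullet> i" borel "I i"] by simp
  qed
  ultimately show ?thesis
    by auto
qed

lemma borel_measurable_dual_weight [measurable]:
  assumes [measurable]: "w \<in> borel_measurable M"
  shows "dual_weight p w \<in> borel_measurable M"
  unfolding dual_weight_def by measurable

lemma dual_weight_pos: "0 < dual_weight p w x"
  by (simp add: dual_weight_def)

lemma nn_set_integral_dual_weight_nonzero:
  assumes [measurable]: "w \<in> borel_measurable M" "R \<in> sets M"
    and "emeasure M R \<noteq> 0"
  shows "(\<integral>\<^sup>+x\<in>R. dual_weight p w x \<partial>M) \<noteq> 0"
proof
  assume "(\<integral>\<^sup>+x\<in>R. dual_weight p w x \<partial>M) = 0"
  then have "AE x in M. dual_weight p w x * indicator R x = 0"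
    using nn_integral_0_iff_AE[of "\<lambda>x. dual_weight p w x * indicator R x" M] by simp
  then have "AE x in M. x \<notin> R"
  proof eventually_elim
    case (elim x)
    then show ?case
      using dual_weight_pos[of p w x] by (auto simp: indicator_def split: if_splits)
  qed
  moreover have "{x \<in> space M. \<not> x \<notin> R} = R"
    using sets.sets_into_space[OF assms(2)] by auto
  ultimately show False
    using AE_iff_measurable[of R M "\<lambda>x. x \<notin> R"] assms(3) by simp
qed

lemma
  assumes [measurable]: "w \<in> borel_measurable M" "R \<in> sets M"
    and "0 < emeasure M R" "emeasure M R < \<infinity>"
    and "Ap_quantity M p w R \<noteq> \<infinity>"
  shows Ap_quantity_finite_dual: "(\<integral>\<^sup>+x\<in>R. dual_weight p w x \<partial>M) \<noteq> \<infinity>"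
    and Ap_quantity_finite_weight: "(\<integral>\<^sup>+x\<in>R. ennreal (w x) \<partial>M) \<noteq> \<infinity>"
proof -
  define S where "S = (\<integral>\<^sup>+x\<in>R. dual_weight p w x \<partial>M)"
  show S_fin: "S \<noteq> \<infinity>"
    using assms(5) unfolding Ap_quantity_def S_def by auto
  have "0 < enn2real S / measure M R"
    using S_fin nn_set_integral_dual_weight_nonzero[of w M R p] assms(3,4)
    by (simp add: S_def enn2real_positive_iff less_top measure_def zero_less_iff_neq_zero)
  then have "ennreal ((enn2real S / measure M R) powr (p - 1)) \<noteq> 0"
    by (simp add: zero_less_divide_iff)
  then show "(\<integral>\<^sup>+x\<in>R. ennreal (w x) \<partial>M) \<noteq> \<infinity>"
    using assms(4,5) S_fin
    by (auto simp: Ap_quantity_def S_def[symmetric] ennreal_top_divide less_top[symmetric])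
qed

lemma enn2real_divide_ennreal:
  assumes "0 < q"
  shows "enn2real (x / ennreal q) = enn2real x / q"
proof (cases x)
  case (real r)
  then show ?thesis
    using assms by (simp add: divide_ennreal)
qed (use assms in \<open>simp add: ennreal_top_divide\<close>)

lemma enn2real_Ap_quantity:
  assumes "0 < emeasure M R" "emeasure M R < \<infinity>"
    and "(\<integral>\<^sup>+x\<in>R. dual_weight p w x \<partial>M) \<noteq> \<infinity>"
  shows "enn2real (Ap_quantity M p w R) =
    avg M w R * (enn2real (\<integral>\<^sup>+x\<in>R. dual_weight p w x \<partial>M) / measure M R) powr (p - 1)"
proof -
  have "emeasure M R = ennreal (measure M R)"
    using assms(2) by (simp add: emeasure_eq_ennreal_measure less_top)
  moreover have "0 < measure M R"
    using assms(1,2) by (simp add: measure_def enn2real_positive_iff)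
  ultimately show ?thesis
    using assms(3) by (simp add: Ap_quantity_def avg_def enn2real_mult enn2real_divide_ennreal)
qed

lemma avg_nonneg: "0 \<le> avg M w R"
  by (simp add: avg_def)

lemma nn_set_integral_eq_avg:
  assumes "0 < emeasure M R" "emeasure M R < \<infinity>"
    and "(\<integral>\<^sup>+x\<in>R. ennreal (w x) \<partial>M) \<noteq> \<infinity>"
  shows "(\<integral>\<^sup>+x\<in>R. ennreal (w x) \<partial>M) = ennreal (avg M w R * measure M R)"
proof -
  have "0 < measure M R"
    using assms(1,2) by (auto simp: measure_def enn2real_positive_iff)
  then show ?thesis
    using assms(3) by (simp add: avg_def ennreal_enn2real_if)
qed

lemma emeasure_zero_set_eq_0:
  assumes "weight M w" "R \<in> sets M"
    and "(\<integral>\<^sup>+x\<in>R. dual_weight p w x \<partial>M) \<noteq> \<infinity>"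
  shows "emeasure M {x\<in>R. w x \<le> 0} = 0"
proof -
  have [measurable]: "w \<in> borel_measurable M" "R \<in> sets M"
    using assms(1,2) by (auto simp: weight_def)
  have "(\<integral>\<^sup>+x. \<infinity> * indicator {x\<in>R. w x \<le> 0} x \<partial>M) \<le> (\<integral>\<^sup>+x\<in>R. dual_weight p w x \<partial>M)"
    using assms(1) by (intro nn_integral_mono) (auto simp: indicator_def dual_weight_def weight_def
        intro: antisym)
  then have "\<infinity> * emeasure M {x\<in>R. w x \<le> 0} \<noteq> \<infinity>"
    using assms(3) by (auto simp: nn_integral_cmult_indicator top_unique)
  then show ?thesis
    by (auto simp: ennreal_top_mult split: if_splits)
qed

lemma conj_exp_powr_exponent:
  assumes "1 < p"
  shows "(1 - conj_exp p) * (p - 1) = -1" "1 - conj_exp p < 0"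
proof -
  show eq: "(1 - conj_exp p) * (p - 1) = -1"
    using assms by (simp add: conj_exp_def field_simps)
  then have "(1 - conj_exp p) * (p - 1) < 0"
    by simp
  then show "1 - conj_exp p < 0"
    using assms by (simp add: mult_less_0_iff)
qed

lemma measure_sublevel_le_dual_integral:
  assumes "1 < p" "weight M w" "R \<in> sets M" "emeasure M R < \<infinity>"
    and "(\<integral>\<^sup>+x\<in>R. dual_weight p w x \<partial>M) \<noteq> \<infinity>"
    and "0 < c"
  shows "c powr (1 - conj_exp p) * measure M {x\<in>R. w x \<le> c}
    \<le> enn2real (\<integral>\<^sup>+x\<in>R. dual_weight p w x \<partial>M)"
proof -
  define E where "E = {x\<in>R. w x \<le> c}"
  define q where "q = 1 - conj_exp p"
  have [measurable]: "w \<in> borel_measurable M" "R \<in> sets M" "E \<in> sets M"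
    using assms(2,3) by (auto simp: weight_def E_def)
  have E_fin: "emeasure M E = ennreal (measure M E)"
    using emeasure_mono[of E R M] assms(4)
    by (intro emeasure_eq_ennreal_measure) (auto simp: E_def top_unique)
  have "ennreal (c powr q) \<le> dual_weight p w x" if "x \<in> E" for x
  proof (cases "w x = 0")
    case False
    then have "c powr q \<le> w x powr q"
      using that conj_exp_powr_exponent(2)[OF assms(1)] assms(2)
      by (intro powr_mono2') (auto simp: E_def weight_def q_def order_le_neq_trans)
    then show ?thesis
      using False by (simp add: dual_weight_def q_def)
  qed (simp add: dual_weight_def)
  then have "(\<integral>\<^sup>+x. ennreal (c powr q) * indicator E x \<partial>M) \<le> (\<integral>\<^sup>+x\<in>R. dual_weight p w x \<partial>M)"
    by (intro nn_integral_mono) (auto simp: indicator_def E_def)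
  then have "ennreal (c powr q * measure M E) \<le> (\<integral>\<^sup>+x\<in>R. dual_weight p w x \<partial>M)"
    by (simp add: nn_integral_cmult_indicator E_fin ennreal_mult'')
  from enn2real_mono[OF this] show ?thesis
    using assms(5) by (simp add: E_def q_def less_top)
qed

lemma avg_mult_measure_sublevel_le:
  assumes "1 < p" "weight M w" "R \<in> sets M" "0 < emeasure M R" "emeasure M R < \<infinity>"
    and "(\<integral>\<^sup>+x\<in>R. dual_weight p w x \<partial>M) \<noteq> \<infinity>"
    and "0 \<le> c"
  shows "avg M w R * (measure M {x\<in>R. w x \<le> c} / measure M R) powr (p - 1)
    \<le> enn2real (Ap_quantity M p w R) * c"
proof (cases "c = 0")
  case True
  then show ?thesis
    using emeasure_zero_set_eq_0[OF assms(2,3,6)] by (simp add: measure_def)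
next
  case False
  with assms(7) have "0 < c"
    by simp
  define t where "t = measure M {x\<in>R. w x \<le> c} / measure M R"
  define s where "s = enn2real (\<integral>\<^sup>+x\<in>R. dual_weight p w x \<partial>M) / measure M R"
  define q where "q = 1 - conj_exp p"
  have "0 < measure M R"
    using assms(4,5) by (simp add: measure_def enn2real_positive_iff)
  have "c powr q * t \<le> s"
    using measure_sublevel_le_dual_integral[OF assms(1-3,5,6) \<open>0 < c\<close>] \<open>0 < measure M R\<close>
    by (simp add: s_def t_def q_def divide_right_mono)
  then have "(c powr q * t) powr (p - 1) \<le> s powr (p - 1)"
    using assms(1) \<open>0 < measure M R\<close> by (intro powr_mono2) (auto simp: t_def)
  also have "(c powr q * t) powr (p - 1) = t powr (p - 1) / c"
    using \<open>0 < c\<close> conj_exp_powr_exponent(1)[OF assms(1)]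
    by (simp add: powr_mult powr_powr q_def powr_minus divide_inverse t_def)
  finally have "t powr (p - 1) \<le> s powr (p - 1) * c"
    using \<open>0 < c\<close> by (simp add: divide_le_eq)
  then have "avg M w R * t powr (p - 1) \<le> avg M w R * (s powr (p - 1) * c)"
    using avg_nonneg by (rule mult_left_mono)
  also have "avg M w R * (s powr (p - 1) * c) = enn2real (Ap_quantity M p w R) * c"
    using enn2real_Ap_quantity[OF assms(4,5,6)] by (simp only: s_def mult.assoc)
  finally show ?thesis
    by (simp only: t_def)
qed

lemma measure_sublevel_le_half:
  assumes "1 < p" "weight M w" "R \<in> sets M" "0 < emeasure M R" "emeasure M R < \<infinity>"
    and "Ap_quantity M p w R \<le> ennreal K" "0 \<le> K"
  shows "measure M {x\<in>R. w x \<le> avg M w R / (2 powr (p - 1) * K)} \<le> measure M R / 2"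
proof -
  define c where "c = avg M w R / (2 powr (p - 1) * K)"
  define t where "t = measure M {x\<in>R. w x \<le> c} / measure M R"
  have "0 < measure M R"
    using assms(4,5) by (simp add: measure_def enn2real_positive_iff)
  have "Ap_quantity M p w R \<noteq> \<infinity>"
    using assms(6) by (auto simp: top_unique)
  then have S_fin: "(\<integral>\<^sup>+x\<in>R. dual_weight p w x \<partial>M) \<noteq> \<infinity>"
    using Ap_quantity_finite_dual assms(2-5) by (auto simp: weight_def)
  have "t \<le> 1 / 2"
  proof (cases "c = 0")
    case True
    then show ?thesis
      using emeasure_zero_set_eq_0[OF assms(2,3) S_fin] by (simp add: t_def measure_def)
  next
    case False
    then have "0 < avg M w R" "0 < K"
      using avg_nonneg[of M w R] assms(7) by (auto simp: c_def)
    then have "0 < c"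
      by (simp add: c_def)
    have "enn2real (Ap_quantity M p w R) \<le> K"
      using enn2real_mono[OF assms(6)] assms(7) by simp
    have "avg M w R * t powr (p - 1) \<le> enn2real (Ap_quantity M p w R) * c"
      unfolding t_def using avg_mult_measure_sublevel_le[OF assms(1-5) S_fin] \<open>0 < c\<close> by simp
    also have "\<dots> \<le> K * c"
      using \<open>enn2real (Ap_quantity M p w R) \<le> K\<close> \<open>0 < c\<close> by (simp add: mult_right_mono)
    also have "K * c = avg M w R * (1 / 2) powr (p - 1)"
      using \<open>0 < K\<close> by (simp add: c_def powr_divide)
    finally have "t powr (p - 1) \<le> (1 / 2) powr (p - 1)"
      using \<open>0 < avg M w R\<close> by simp
    then show ?thesis
      using assms(1) powr_less_mono2[of "p - 1" "1 / 2" t] by (auto simp: not_le[symmetric])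
  qed
  then show ?thesis
    using \<open>0 < measure M R\<close> by (simp add: t_def c_def field_simps)
qed

lemma measure_superlevel_ge_half:
  assumes "1 < p" "weight M w" "R \<in> sets M" "0 < emeasure M R" "emeasure M R < \<infinity>"
    and "Ap_quantity M p w R \<le> ennreal K" "0 \<le> K"
  shows "measure M R \<le> 2 * measure M {x\<in>R. avg M w R / (2 powr (p - 1) * K) < w x}"
proof -
  define c where "c = avg M w R / (2 powr (p - 1) * K)"
  have [measurable]: "w \<in> borel_measurable M" "R \<in> sets M"
    using assms(2,3) by (auto simp: weight_def)
  have subset_fin: "emeasure M A \<noteq> \<infinity>" if "A \<subseteq> R" for A
    using emeasure_mono[OF that assms(3)] assms(5) by (auto simp: top_unique)
  have "measure M R = measure M ({x\<in>R. w x \<le> c} \<union> {x\<in>R. c < w x})"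
    by (rule arg_cong[where f = "measure M"]) auto
  also have "\<dots> \<le> measure M {x\<in>R. w x \<le> c} + measure M {x\<in>R. c < w x}"
    using subset_fin[of "{x\<in>R. w x \<le> c}"] subset_fin[of "{x\<in>R. c < w x}"]
    by (intro measure_subadditive) auto
  also have "\<dots> \<le> measure M R / 2 + measure M {x\<in>R. c < w x}"
    using measure_sublevel_le_half[OF assms] by (simp add: c_def)
  finally show ?thesis
    by (simp add: c_def)
qed

lemma nn_set_integral_superlevel_le:
  assumes "R \<in> sets M" "0 < emeasure M R" "emeasure M R < \<infinity>"
    and "(\<integral>\<^sup>+x\<in>R. ennreal (w x) \<partial>M) \<noteq> \<infinity>"
    and "avg M w R < lam" "F \<subseteq> R" "measure M R \<le> 2 * measure M F"
  shows "(\<integral>\<^sup>+x\<in>{x\<in>R. w x > lam}. ennreal (w x) \<partial>M) \<le> ennreal (2 * lam) * emeasure M F"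
proof -
  have "0 < lam"
    using assms(5) avg_nonneg[of M w R] by simp
  have F_eq: "emeasure M F = ennreal (measure M F)"
    using emeasure_mono[OF assms(6,1)] assms(3)
    by (intro emeasure_eq_ennreal_measure) (auto simp: top_unique)
  have "avg M w R * measure M R \<le> lam * measure M R"
    using assms(5) by (intro mult_right_mono) auto
  also have "\<dots> \<le> 2 * lam * measure M F"
    using assms(7) \<open>0 < lam\<close> by simp
  finally have avg_le: "avg M w R * measure M R \<le> 2 * lam * measure M F" .
  have "(\<integral>\<^sup>+x\<in>{x\<in>R. w x > lam}. ennreal (w x) \<partial>M) \<le> (\<integral>\<^sup>+x\<in>R. ennreal (w x) \<partial>M)"
    by (rule nn_set_integral_set_mono) auto
  also have "\<dots> = ennreal (avg M w R * measure M R)"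
    using assms(2-4) by (rule nn_set_integral_eq_avg)
  also have "\<dots> \<le> ennreal (2 * lam * measure M F)"
    using avg_le by (rule ennreal_leI)
  also have "\<dots> = ennreal (2 * lam) * emeasure M F"
    using \<open>0 < lam\<close> by (simp add: F_eq ennreal_mult)
  finally show ?thesis .
qed

theorem lemma2p1:
  fixes M :: "'a::euclidean_space measure" and p :: real and w :: "'a \<Rightarrow> real"
    and R :: "'a set" and lam :: real
  assumes "nonatomic_radon M"
    and "1 < p"
    and "w \<in> Ap_star M p"
    and "adm_rect M R"
    and "lam > avg M w R"
  shows "(\<integral>\<^sup>+x\<in>{x\<in>R. w x > lam}. ennreal (w x) \<partial>M)
           \<le> ennreal (2 * lam) *
             emeasure M {x\<in>R. w x > avg M w R / (2 powr (p - 1) * enn2real (Ap_char M p w))}"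
proof -
  have weight: "weight M w" and "Ap_char M p w \<noteq> \<infinity>"
    using assms(3) by (auto simp: Ap_star_def)
  have R_sets: "R \<in> sets M"
    using assms(1,4) rectangle_sets_borel by (auto simp: nonatomic_radon_def adm_rect_def)
  have R_pos: "0 < emeasure M R" and R_fin: "emeasure M R < \<infinity>"
    using assms(4) by (auto simp: adm_rect_def)
  have "Ap_quantity M p w R \<le> Ap_char M p w"
    unfolding Ap_char_def using assms(4) by (auto intro: SUP_upper)
  then have Ap_le: "Ap_quantity M p w R \<le> ennreal (enn2real (Ap_char M p w))"
    using \<open>Ap_char M p w \<noteq> \<infinity>\<close> by (simp add: ennreal_enn2real_if)
  then have "Ap_quantity M p w R \<noteq> \<infinity>"
    by (auto simp: top_unique)
  then have "(\<integral>\<^sup>+x\<in>R. ennreal (w x) \<partial>M) \<noteq> \<infinity>"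
    using weight Ap_quantity_finite_weight[OF _ R_sets R_pos R_fin] by (simp add: weight_def)
  then show ?thesis
    using measure_superlevel_ge_half[OF assms(2) weight R_sets R_pos R_fin Ap_le]
    by (intro nn_set_integral_superlevel_le[OF R_sets R_pos R_fin _ assms(5)]) auto
qed

end
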